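(* In a finite dynamic game as described in the context, suppose $K^i$ is unilaterally sufficient information for player $i\in\mathcal{I}$. Then for each $j\in\mathcal{I}\setminus\{i\}$ and $t\in\mathcal{T}$ there exist functions $\Pi_t^{j,i,g^{-\{i,j\}}}:\mathcal{K}_t^i\times\mathcal{H}_t^j\times\mathcal{U}_t^i\times\mathcal{U}_t^j\to\Delta(\mathcal{H}_{t+1}^j)$ and $r_t^{i,j,g^{-\{i,j\}}}:\mathcal{K}_t^i\times\mathcal{H}_t^j\times\mathcal{U}_t^i\times\mathcal{U}_t^j\to[-1,1]$, depending on the strategy profile $g$ only through $g^{-\{i,j\}}=(g^l)_{l\notin\{i,j\}}$, such that for all behavioral strategy profiles $g$: (1) $\Pr^g(\tilde h_{t+1}^j\mid h_t^i,h_t^j,u_t^i,u_t^j)=\Pi_t^{j,i,g^{-\{i,j\}}}(\tilde h_{t+1}^j\mid k_t^i,h_t^j,u_t^i,u_t^j)$ for all $t<T$, and (2) $\mathbb{E}^g[R_t^j\mid h_t^i,h_t^j,u_t^i,u_t^j]=r_t^{i,j,g^{-\{i,j\}}}(k_t^i,h_t^j,u_t^i,u_t^j)$ for all $t$, whenever the left-hand sides are well defined (the conditioning event has positive probability).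
   Context: Game model: finite set of players $\mathcal{I}$, times $\mathcal{T}=\{1,\dots,T\}$. At time $t$ each player $i$ takes action $U_t^i\in\mathcal{U}_t^i$, obtains reward $R_t^i\in[-1,1]$ and learns new information $Z_t^i\in\mathcal{Z}_t^i$. There is a state $X_t\in\mathcal{X}_t$ with $(X_{t+1},Z_t,R_t)=f_t(X_t,U_t,W_t)$ for fixed functions $f_t$. Primitive random variables $(X_1,H_1)$ and $W_1,\dots,W_T$ are mutually independent with commonly known distributions. All sets are finite. Perfect recall: $H_t^i=(H_1^i,Z_{1:t-1}^i)\in\mathcal{H}_t^i$, and $U_t^i$ is a component of $Z_t^i$. Behavioral strategy $g_t^i:\mathcal{H}_t^i\to\Delta(\mathcal{U}_t^i)$. A realization is admissible under $g$ if it has positive probability under $g$. Compression: $K_1^i=\iota_1^i(H_1^i)$, $K_t^i=\iota_t^i(K_{t-1}^i,Z_{t-1}^i)$ for fixed maps, finite value sets $\mathcal{K}_t^i$; $k_t^i$ is the compression of $h_t^i$. Unilaterally sufficient information (USI): $K^i$ is USI for player $i$ if there exist $F_t^{i,g^i}:\mathcal{K}_t^i\to\Delta(\mathcal{H}_t^i)$ depending only on $g^i$ and $\Phi_t^{i,g^{-i}}:\mathcal{K}_t^i\to\Delta(\mathcal{X}_t\times\mathcal{H}_t^{-i})$ depending only on $g^{-i}$ with $\Pr^g(x_t,h_t\mid k_t^i)=F_t^{i,g^i}(h_t^i\mid k_t^i)\Phi_t^{i,g^{-i}}(x_t,h_t^{-i}\mid k_t^i)$ for all behavioral profiles $g$,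 all $t$, all $k_t^i$ admissible under $g$ (with $x_t,h_t^i,h_t^{-i}$ ranging independently; the left side is $0$ if they disagree on shared components). *)

theory Defs
  imports "HOL-Probability.Probability"
begin

(* Players: a finite type 'i (the player set is UNIV).  Times 1..T.
   Private information learned at time t by player l is Z_t^l = (U_t^l, Y_t^l),
   so that the own action is a component of Z_t^l.
   A history of player l at time t is H_t^l = (H_1^l, [Z_1^l, ..., Z_{t-1}^l]). *)

type_synonym ('h1,'u,'y) hist = "'h1 \<times> ('u \<times> 'y) list"

(* a behavioural strategy profile: g t l h is the distribution of U_t^l given H_t^l = h *)
type_synonym ('i,'h1,'u,'y) profile = "nat \<Rightarrow> 'i \<Rightarrow> ('h1,'u,'y) hist \<Rightarrow> 'u pmf"

(* f t x u w = (X_{t+1}, (Y_t^l)_l, (R_t^l)_l) *)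
type_synonym ('x,'i,'u,'w,'y) dyn = "nat \<Rightarrow> 'x \<Rightarrow> ('i \<Rightarrow> 'u) \<Rightarrow> 'w \<Rightarrow> 'x \<times> ('i \<Rightarrow> 'y) \<times> ('i \<Rightarrow> real)"

definition behavioral :: "nat \<Rightarrow> (nat \<Rightarrow> 'i \<Rightarrow> 'u set) \<Rightarrow> ('i,'h1,'u,'y) profile \<Rightarrow> bool" where
  "behavioral T U g \<longleftrightarrow>
     (\<forall>t\<in>{1..T}. \<forall>l h. length (snd h) = t - 1 \<longrightarrow> set_pmf (g t l h) \<subseteq> U t l)"

definition agree_on :: "nat \<Rightarrow> 'i set \<Rightarrow> ('i,'h1,'u,'y) profile \<Rightarrow> ('i,'h1,'u,'y) profile \<Rightarrow> bool" where
  "agree_on T P g g' \<longleftrightarrow>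
     (\<forall>t\<in>{1..T}. \<forall>l\<in>P. \<forall>h. length (snd h) = t - 1 \<longrightarrow> g t l h = g' t l h)"

(* one period: from the distribution S of (X_t, H_t) to the joint distribution of
   (X_t, H_t, U_t, (X_{t+1}, Y_t, R_t)) *)
definition step_pmf ::
  "('i::finite,'h1,'u,'y) profile \<Rightarrow> ('x,'i,'u,'w,'y) dyn \<Rightarrow> (nat \<Rightarrow> 'w pmf) \<Rightarrow> nat
   \<Rightarrow> ('x \<times> ('i \<Rightarrow> ('h1,'u,'y) hist)) pmf
   \<Rightarrow> ('x \<times> ('i \<Rightarrow> ('h1,'u,'y) hist) \<times> ('i \<Rightarrow> 'u) \<times> ('x \<times> ('i \<Rightarrow> 'y) \<times> ('i \<Rightarrow> real))) pmf" where
  "step_pmf g f W t S =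
     S \<bind> (\<lambda>(x, h). Pi_pmf UNIV undefined (\<lambda>l. g t l (h l)) \<bind>
       (\<lambda>u. map_pmf (\<lambda>w. (x, h, u, f t x u w)) (W t)))"

definition next_hist :: "('h1,'u,'y) hist \<Rightarrow> 'u \<Rightarrow> 'y \<Rightarrow> ('h1,'u,'y) hist" where
  "next_hist h u y = (fst h, snd h @ [(u, y)])"

definition post ::
  "('x \<times> ('i \<Rightarrow> ('h1,'u,'y) hist) \<times> ('i \<Rightarrow> 'u) \<times> ('x \<times> ('i \<Rightarrow> 'y) \<times> ('i \<Rightarrow> real)))
   \<Rightarrow> 'x \<times> ('i \<Rightarrow> ('h1,'u,'y) hist)" where
  "post \<omega> = (case \<omega> of (x, h, u, (x', y, r)) \<Rightarrow> (x', \<lambda>l. next_hist (h l) (u l) (y l)))"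

(* state_pmf ... n = distribution of (X_{n+1}, H_{n+1}) under g *)
fun state_pmf ::
  "('x \<times> ('i \<Rightarrow> 'h1)) pmf \<Rightarrow> (nat \<Rightarrow> 'w pmf) \<Rightarrow> ('x,'i::finite,'u,'w,'y) dyn
   \<Rightarrow> ('i,'h1,'u,'y) profile \<Rightarrow> nat \<Rightarrow> ('x \<times> ('i \<Rightarrow> ('h1,'u,'y) hist)) pmf" where
  "state_pmf init W f g 0 = map_pmf (\<lambda>(x, h1). (x, \<lambda>l. (h1 l, []))) init"
| "state_pmf init W f g (Suc n) = map_pmf post (step_pmf g f W (Suc n) (state_pmf init W f g n))"

definition state_at where
  "state_at init W f g t = state_pmf init W f g (t - 1)"

definition trans_at where
  "trans_at init W f g t = step_pmf g f W t (state_at init W f g t)"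

definition cprob :: "'a pmf \<Rightarrow> 'a set \<Rightarrow> 'a set \<Rightarrow> real" where
  "cprob p A B = measure_pmf.prob p (A \<inter> B) / measure_pmf.prob p B"

definition cexp :: "'a pmf \<Rightarrow> ('a \<Rightarrow> real) \<Rightarrow> 'a set \<Rightarrow> real" where
  "cexp p X B = measure_pmf.expectation p (\<lambda>\<omega>. indicator B \<omega> * X \<omega>) / measure_pmf.prob p B"

(* compression: K_1 = iota1 l H_1, K_{t} = iota t l K_{t-1} Z_{t-1} *)
fun comp_aux :: "(nat \<Rightarrow> 'i \<Rightarrow> 'k \<Rightarrow> 'u \<times> 'y \<Rightarrow> 'k) \<Rightarrow> 'i \<Rightarrow> nat \<Rightarrow> 'k \<Rightarrow> ('u \<times> 'y) list \<Rightarrow> 'k" where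
  "comp_aux \<iota> l t k [] = k"
| "comp_aux \<iota> l t k (z # zs) = comp_aux \<iota> l (Suc t) (\<iota> (Suc t) l k z) zs"

definition compress :: "('i \<Rightarrow> 'h1 \<Rightarrow> 'k) \<Rightarrow> (nat \<Rightarrow> 'i \<Rightarrow> 'k \<Rightarrow> 'u \<times> 'y \<Rightarrow> 'k) \<Rightarrow> 'i \<Rightarrow> ('h1,'u,'y) hist \<Rightarrow> 'k" where
  "compress \<iota>1 \<iota> l h = comp_aux \<iota> l 1 (\<iota>1 l (fst h)) (snd h)"

(* Unilaterally sufficient information for player i.
   F depends on the profile only through g^i, Phi only through g^{-i};
   the pair (x, h^{-i}) is represented as (x, h(i := undefined)). *)
definition USI ::
  "('x \<times> ('i \<Rightarrow> 'h1)) pmf \<Rightarrow> (nat \<Rightarrow> 'w pmf) \<Rightarrow> ('x,'i::finite,'u,'w,'y) dyn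
   \<Rightarrow> (nat \<Rightarrow> 'i \<Rightarrow> 'u set) \<Rightarrow> nat \<Rightarrow> ('i \<Rightarrow> 'h1 \<Rightarrow> 'k) \<Rightarrow> (nat \<Rightarrow> 'i \<Rightarrow> 'k \<Rightarrow> 'u \<times> 'y \<Rightarrow> 'k)
   \<Rightarrow> 'i \<Rightarrow> bool" where
  "USI init W f U T \<iota>1 \<iota> i \<longleftrightarrow>
    (\<exists>(F :: ('i,'h1,'u,'y) profile \<Rightarrow> nat \<Rightarrow> 'k \<Rightarrow> ('h1,'u,'y) hist pmf)
      (\<Phi> :: ('i,'h1,'u,'y) profile \<Rightarrow> nat \<Rightarrow> 'k \<Rightarrow> ('x \<times> ('i \<Rightarrow> ('h1,'u,'y) hist)) pmf).
      (\<forall>g g'. behavioral T U g \<and> behavioral T U g' \<and> agree_on T {i} g g' \<longrightarrow> F g = F g') \<and>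
      (\<forall>g g'. behavioral T U g \<and> behavioral T U g' \<and> agree_on T (- {i}) g g' \<longrightarrow> \<Phi> g = \<Phi> g') \<and>
      (\<forall>g. behavioral T U g \<longrightarrow>
        (\<forall>t\<in>{1..T}. \<forall>k.
          measure_pmf.prob (state_at init W f g t) {(x, h). compress \<iota>1 \<iota> i (h i) = k} > 0 \<longrightarrow>
          (\<forall>x h. cprob (state_at init W f g t) {(x, h)} {(x', h'). compress \<iota>1 \<iota> i (h' i) = k}
                 = pmf (F g t k) (h i) * pmf (\<Phi> g t k) (x, h(i := undefined))))))"

end

theory Submission
  imports Defs
begin

(* With perfect recall the probability of a
   state (x, h) is a term of nature times, for every player l, the probability that g^l produced the
   actions recorded in h^l.  On the event {H^i = h^i, H^j = h^j, U^i = u^i, U^j = u^j} the factors of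
   i and j are constants, so conditional laws given this event do not change when g^i and g^j are
   replaced by uniform strategies, which depend on nothing.  For the uniformized profile the USI
   factorization Pr(x, h | k^i) = F(h^i) Phi(x, h^{-i}) shows that replacing h^i by another history
   with the same compression rescales the state distribution on the event by a constant, so the
   conditional laws depend on h^i only through k^i. *)

lemma set_pmf_step_pmfD:
  assumes "\<omega> \<in> set_pmf (step_pmf g f W t S)"
  obtains x h u w where "\<omega> = (x, h, u, f t x u w)" "(x, h) \<in> set_pmf S"
    "\<And>l. u l \<in> set_pmf (g t l (h l))"
  using assms unfolding step_pmf_def by (auto simp: set_Pi_pmf PiE_dflt_def)

lemma finite_set_pmf_step_pmf:
  fixes S :: "('x \<times> ('i::finite \<Rightarrow> ('h1,'u::finite,'y) hist)) pmf" and W :: "nat \<Rightarrow> 'w::finite pmf"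
  assumes "finite (set_pmf S)"
  shows "finite (set_pmf (step_pmf g f W t S))"
proof (rule finite_subset)
  show "set_pmf (step_pmf g f W t S) \<subseteq> (\<lambda>(a, u, w). (fst a, snd a, u, f t (fst a) u w)) ` (set_pmf S \<times> UNIV)"
  proof
    fix \<omega> assume "\<omega> \<in> set_pmf (step_pmf g f W t S)"
    then obtain x h u w where "\<omega> = (x, h, u, f t x u w)" "(x, h) \<in> set_pmf S"
      by (rule set_pmf_step_pmfD)
    then show "\<omega> \<in> (\<lambda>(a, u, w). (fst a, snd a, u, f t (fst a) u w)) ` (set_pmf S \<times> UNIV)"
      by (intro rev_image_eqI[of "((x, h), u, w)"]) auto
  qed
qed (use assms in auto)

lemma finite_set_pmf_state_pmf:
  fixes init :: "('x::finite \<times> ('i::finite \<Rightarrow> 'h1::finite)) pmf"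
    and W :: "nat \<Rightarrow> 'w::finite pmf" and f :: "('x,'i,'u::finite,'w,'y) dyn"
  shows "finite (set_pmf (state_pmf init W f g n))"
  by (induction n) (simp_all add: finite_set_pmf_step_pmf)

lemma length_hist_state_pmf:
  "(x, h) \<in> set_pmf (state_pmf init W f g n) \<Longrightarrow> length (snd (h l)) = n"
proof (induction n arbitrary: x h)
  case (Suc n)
  then obtain \<omega> where \<omega>: "\<omega> \<in> set_pmf (step_pmf g f W (Suc n) (state_pmf init W f g n))" "(x, h) = post \<omega>"
    by auto
  from \<omega>(1) obtain x0 h0 u w where "\<omega> = (x0, h0, u, f (Suc n) x0 u w)" "(x0, h0) \<in> set_pmf (state_pmf init W f g n)"
    by (rule set_pmf_step_pmfD)
  with \<omega>(2) Suc.IH show ?case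
    by (auto simp: post_def next_hist_def split: prod.splits)
qed auto

lemma expectation_step_pmf:
  fixes S :: "('x \<times> ('i::finite \<Rightarrow> ('h1,'u::finite,'y) hist)) pmf"
    and W :: "nat \<Rightarrow> 'w::finite pmf" and \<phi> :: "_ \<Rightarrow> real"
  assumes "finite (set_pmf S)"
  shows "measure_pmf.expectation (step_pmf g f W t S) \<phi> =
    (\<Sum>a\<in>set_pmf S. pmf S a * (\<Sum>u\<in>UNIV. (\<Prod>l\<in>UNIV. pmf (g t l (snd a l)) (u l)) *
        measure_pmf.expectation (W t) (\<lambda>w. \<phi> (fst a, snd a, u, f t (fst a) u w))))"
proof -
  have inner: "measure_pmf.expectation
      (Pi_pmf UNIV undefined (\<lambda>l. g t l (h l)) \<bind> (\<lambda>u. map_pmf (\<lambda>w. (x, h, u, f t x u w)) (W t))) \<phi> =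
    (\<Sum>u\<in>UNIV. (\<Prod>l\<in>UNIV. pmf (g t l (h l)) (u l)) * measure_pmf.expectation (W t) (\<lambda>w. \<phi> (x, h, u, f t x u w)))"
    for x h by (subst pmf_expectation_bind[of UNIV]) (simp_all add: pmf_Pi'[of UNIV, simplified])
  have "finite (set_pmf (Pi_pmf UNIV undefined (\<lambda>l. g t l (h l)) \<bind> (\<lambda>u. map_pmf (\<lambda>w. (x, h, u, f t x u w)) (W t))))"
    for x h by (rule finite_subset[of _ "(\<lambda>(u, w). (x, h, u, f t x u w)) ` UNIV"]) force+
  then show ?thesis
    unfolding step_pmf_def using assms
    by (subst pmf_expectation_bind[of "set_pmf S"]) (auto simp: inner intro!: sum.cong)
qed

section \<open>Factorization of the state distribution\<close>

definition prev_hist :: "('h1,'u,'y) hist \<Rightarrow> ('h1,'u,'y) hist" where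
  "prev_hist h = (fst h, butlast (snd h))"

definition last_action :: "('h1,'u,'y) hist \<Rightarrow> 'u" where
  "last_action h = fst (last (snd h))"

definition last_obs :: "('h1,'u,'y) hist \<Rightarrow> 'y" where
  "last_obs h = snd (last (snd h))"

lemma next_hist_eq_iff:
  "next_hist h u y = h' \<longleftrightarrow> snd h' \<noteq> [] \<and> h = prev_hist h' \<and> u = last_action h' \<and> y = last_obs h'"
  by (cases h; cases h'; cases "snd h'" rule: rev_cases)
     (auto simp: next_hist_def prev_hist_def last_action_def last_obs_def)

lemma post_eq_iff:
  "post (x, h, u, z) = (x', h') \<longleftrightarrow> (\<forall>l. snd (h' l) \<noteq> []) \<and> h = (\<lambda>l. prev_hist (h' l)) \<and>
     u = (\<lambda>l. last_action (h' l)) \<and> fst z = x' \<and> fst (snd z) = (\<lambda>l. last_obs (h' l))"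
  by (cases z) (auto simp: post_def fun_eq_iff next_hist_eq_iff)

lemma sum_set_pmf_superset:
  fixes F :: "'a \<Rightarrow> real"
  assumes "finite (set_pmf S)" "finite A" "\<And>a. a \<in> set_pmf S \<Longrightarrow> F a \<noteq> 0 \<Longrightarrow> a \<in> A"
  shows "(\<Sum>a\<in>set_pmf S. pmf S a * F a) = (\<Sum>a\<in>A. pmf S a * F a)"
proof -
  have "(\<Sum>a\<in>set_pmf S. pmf S a * F a) = measure_pmf.expectation S F"
    using assms(1) by (subst integral_measure_pmf_real[of "set_pmf S"]) (auto simp: mult.commute)
  also have "\<dots> = (\<Sum>a\<in>A. pmf S a * F a)"
    using assms by (subst integral_measure_pmf_real[of A]) (auto simp: mult.commute)
  finally show ?thesis .
qed

lemma sum_set_pmf_fiber: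
  fixes S :: "('a::finite \<times> 'b) pmf" and F :: "'a \<Rightarrow> real"
  assumes "finite (set_pmf S)"
  shows "(\<Sum>a\<in>set_pmf S. pmf S a * (if snd a = b then F (fst a) else 0)) = (\<Sum>x\<in>UNIV. pmf S (x, b) * F x)"
proof -
  have "(\<Sum>a\<in>set_pmf S. pmf S a * (if snd a = b then F (fst a) else 0)) =
      (\<Sum>a\<in>range (\<lambda>x. (x, b)). pmf S a * (if snd a = b then F (fst a) else 0))"
    using assms by (rule sum_set_pmf_superset) (auto split: if_splits intro: rev_image_eqI)
  also have "\<dots> = (\<Sum>x\<in>UNIV. pmf S (x, b) * F x)"
    by (subst sum.reindex) (auto simp: inj_on_def)
  finally show ?thesis .
qed

definition nature_prob ::
  "(nat \<Rightarrow> 'w pmf) \<Rightarrow> ('x,'i,'u,'w,'y) dyn \<Rightarrow> nat \<Rightarrow> 'x \<Rightarrow> 'x \<Rightarrow> ('i \<Rightarrow> ('h1,'u,'y) hist) \<Rightarrow> real" where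
  "nature_prob W f t x x' h' = measure_pmf.prob (W t)
     {w. fst (f t x (\<lambda>l. last_action (h' l)) w) = x' \<and> fst (snd (f t x (\<lambda>l. last_action (h' l)) w)) = (\<lambda>l. last_obs (h' l))}"

lemma prob_step_to_post:
  fixes W :: "nat \<Rightarrow> 'w::finite pmf" and f :: "('x,'i::finite,'u::finite,'w,'y) dyn"
  shows "(\<Sum>u\<in>UNIV. (\<Prod>l\<in>UNIV. pmf (g t l (h l)) (u l)) *
      measure_pmf.expectation (W t) (\<lambda>w. indicator (post -` {(x', h')}) (x, h, u, f t x u w))) =
    (if h = (\<lambda>l. prev_hist (h' l)) then if \<forall>l. snd (h' l) \<noteq> [] then
      (\<Prod>l\<in>UNIV. pmf (g t l (prev_hist (h' l))) (last_action (h' l))) * nature_prob W f t x x' h' else 0 else 0)"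
proof -
  let ?ph = "\<lambda>l. prev_hist (h' l)" and ?lu = "\<lambda>l. last_action (h' l)" and ?C = "\<forall>l. snd (h' l) \<noteq> []"
  have "{w. post (x, h, u, f t x u w) = (x', h')} =
      (if ?C \<and> h = ?ph \<and> u = ?lu then {w. fst (f t x ?lu w) = x' \<and> fst (snd (f t x ?lu w)) = (\<lambda>l. last_obs (h' l))} else {})"
    for u by (auto simp: post_eq_iff)
  moreover have "(\<lambda>w. indicator (post -` {(x', h')}) (x, h, u, f t x u w) :: real) =
      indicator {w. post (x, h, u, f t x u w) = (x', h')}" for u
    by (simp add: fun_eq_iff indicator_def)
  ultimately have "(\<Prod>l\<in>UNIV. pmf (g t l (h l)) (u l)) *
      measure_pmf.expectation (W t) (\<lambda>w. indicator (post -` {(x', h')}) (x, h, u, f t x u w)) =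
      (if h = ?ph then if ?C then if u = ?lu then
        (\<Prod>l\<in>UNIV. pmf (g t l (?ph l)) (?lu l)) * nature_prob W f t x x' h' else 0 else 0 else 0)" for u
    by (simp add: nature_prob_def)
  then show ?thesis
    by (cases "h = ?ph"; cases ?C) (simp_all only: if_True if_False simp_thms sum.delta finite UNIV_I sum.neutral_const)
qed

lemma pmf_state_pmf_Suc:
  fixes init :: "('x::finite \<times> ('i::finite \<Rightarrow> 'h1::finite)) pmf"
    and W :: "nat \<Rightarrow> 'w::finite pmf" and f :: "('x,'i,'u::finite,'w,'y) dyn"
  shows "pmf (state_pmf init W f g (Suc n)) (x', h') =
   (if \<forall>l. snd (h' l) \<noteq> [] then (\<Prod>l\<in>UNIV. pmf (g (Suc n) l (prev_hist (h' l))) (last_action (h' l))) *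
      (\<Sum>x\<in>UNIV. pmf (state_pmf init W f g n) (x, \<lambda>l. prev_hist (h' l)) * nature_prob W f (Suc n) x x' h')
    else 0)"
proof -
  let ?S = "state_pmf init W f g n" and ?ph = "\<lambda>l. prev_hist (h' l)"
  let ?C = "\<forall>l. snd (h' l) \<noteq> []" and ?P = "\<Prod>l\<in>UNIV. pmf (g (Suc n) l (prev_hist (h' l))) (last_action (h' l))"
  have "pmf (state_pmf init W f g (Suc n)) (x', h') = measure_pmf.prob (step_pmf g f W (Suc n) ?S) (post -` {(x', h')})"
    by (simp add: pmf_map)
  also have "\<dots> = measure_pmf.expectation (step_pmf g f W (Suc n) ?S) (indicator (post -` {(x', h')}))"
    by simp
  also have "\<dots> = (\<Sum>a\<in>set_pmf ?S. pmf ?S a * (if snd a = ?ph then (if ?C then ?P * nature_prob W f (Suc n) (fst a) x' h' else 0) else 0))"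
    by (simp only: expectation_step_pmf[OF finite_set_pmf_state_pmf] prob_step_to_post)
  also have "\<dots> = (\<Sum>x\<in>UNIV. pmf ?S (x, ?ph) * (if ?C then ?P * nature_prob W f (Suc n) x x' h' else 0))"
    by (rule sum_set_pmf_fiber[OF finite_set_pmf_state_pmf])
  also have "\<dots> = (if ?C then ?P * (\<Sum>x\<in>UNIV. pmf ?S (x, ?ph) * nature_prob W f (Suc n) x x' h') else 0)"
  proof (cases ?C)
    case True
    then show ?thesis by (simp add: sum_distrib_left mult_ac)
  next
    case False
    then show ?thesis by (simp only: if_not_P[OF False] if_False mult_zero_right sum.neutral_const)
  qed
  finally show ?thesis .
qed

definition action_prob :: "('i,'h1,'u,'y) profile \<Rightarrow> 'i \<Rightarrow> nat \<Rightarrow> ('h1,'u,'y) hist \<Rightarrow> real" where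
  "action_prob g l n h = (if length (snd h) = n then
     (\<Prod>s<n. pmf (g (Suc s) l (fst h, take s (snd h))) (fst (snd h ! s))) else 0)"

lemma action_prob_Suc:
  assumes "snd h \<noteq> []"
  shows "action_prob g l (Suc n) h = action_prob g l n (prev_hist h) * pmf (g (Suc n) l (prev_hist h)) (last_action h)"
proof (cases "length (snd h) = Suc n")
  case True
  let ?zs = "snd h"
  have "(\<Prod>s<Suc n. pmf (g (Suc s) l (fst h, take s ?zs)) (fst (?zs ! s))) =
        (\<Prod>s<n. pmf (g (Suc s) l (fst h, take s ?zs)) (fst (?zs ! s))) *
        pmf (g (Suc n) l (fst h, take n ?zs)) (fst (?zs ! n))"
    by simp
  also have "(\<Prod>s<n. pmf (g (Suc s) l (fst h, take s ?zs)) (fst (?zs ! s))) =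
             (\<Prod>s<n. pmf (g (Suc s) l (fst h, take s (butlast ?zs))) (fst (butlast ?zs ! s)))"
    using True by (intro prod.cong refl) (simp add: take_butlast nth_butlast)
  also have "take n ?zs = butlast ?zs"
    using True by (simp add: butlast_conv_take)
  also have "?zs ! n = last ?zs"
    using True assms by (simp add: last_conv_nth)
  finally show ?thesis
    using True by (simp add: action_prob_def prev_hist_def last_action_def)
next
  case False
  moreover have "length (butlast (snd h)) \<noteq> n"
    using False assms by (cases "snd h") auto
  ultimately show ?thesis
    by (simp add: action_prob_def prev_hist_def)
qed

fun nature_weight ::
  "('x \<times> ('i \<Rightarrow> 'h1)) pmf \<Rightarrow> (nat \<Rightarrow> 'w pmf) \<Rightarrow> ('x::finite,'i::finite,'u,'w,'y) dyn
   \<Rightarrow> nat \<Rightarrow> 'x \<times> ('i \<Rightarrow> ('h1,'u,'y) hist) \<Rightarrow> real" where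
  "nature_weight init W f 0 a = pmf (map_pmf (\<lambda>(x, h1). (x, \<lambda>l. (h1 l, []))) init) a"
| "nature_weight init W f (Suc n) (x', h') = (if \<forall>l. snd (h' l) \<noteq> [] then
     (\<Sum>x\<in>UNIV. nature_weight init W f n (x, \<lambda>l. prev_hist (h' l)) * nature_prob W f (Suc n) x x' h')
     else 0)"

lemma pmf_state_pmf_factor:
  fixes init :: "('x::finite \<times> ('i::finite \<Rightarrow> 'h1::finite)) pmf"
    and W :: "nat \<Rightarrow> 'w::finite pmf" and f :: "('x,'i,'u::finite,'w,'y) dyn"
  shows "pmf (state_pmf init W f g n) (x, h) = nature_weight init W f n (x, h) * (\<Prod>l\<in>UNIV. action_prob g l n (h l))"
proof (induction n arbitrary: x h)
  case 0
  show ?case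
  proof (cases "(x, h) \<in> set_pmf (state_pmf init W f g 0)")
    case True
    then have "length (snd (h l)) = 0" for l
      by (rule length_hist_state_pmf)
    then show ?thesis by (simp add: action_prob_def)
  next
    case False
    then have "pmf (state_pmf init W f g 0) (x, h) = 0"
      by (simp add: set_pmf_iff del: state_pmf.simps)
    then show ?thesis by simp
  qed
next
  case (Suc n)
  show ?case
  proof (cases "\<forall>l. snd (h l) \<noteq> []")
    case True
    then have "(\<Prod>l\<in>UNIV. action_prob g l (Suc n) (h l)) =
      (\<Prod>l\<in>UNIV. action_prob g l n (prev_hist (h l))) * (\<Prod>l\<in>UNIV. pmf (g (Suc n) l (prev_hist (h l))) (last_action (h l)))"
      by (simp add: action_prob_Suc prod.distrib)
    with True show ?thesis
      by (simp add: pmf_state_pmf_Suc Suc.IH sum_distrib_left mult_ac del: state_pmf.simps)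
  next
    case False
    then show ?thesis by (simp only: pmf_state_pmf_Suc nature_weight.simps if_False)
  qed
qed

definition joint_event :: "'i \<Rightarrow> 'i \<Rightarrow> ('h1,'u,'y) hist \<Rightarrow> ('h1,'u,'y) hist \<Rightarrow> 'u \<Rightarrow> 'u \<Rightarrow>
   ('x \<times> ('i \<Rightarrow> ('h1,'u,'y) hist) \<times> ('i \<Rightarrow> 'u) \<times> ('x \<times> ('i \<Rightarrow> 'y) \<times> ('i \<Rightarrow> real))) set" where
  "joint_event i j hi hj ui uj = {(x, h, u, x', y, rw). h i = hi \<and> h j = hj \<and> u i = ui \<and> u j = uj}"

lemma mem_joint_event:
  "(x, h, u, z) \<in> joint_event i j hi hj ui uj \<longleftrightarrow> h i = hi \<and> h j = hj \<and> u i = ui \<and> u j = uj"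
  by (cases z) (simp add: joint_event_def)

definition others_factor ::
  "('i::finite,'h1,'u::finite,'y) profile \<Rightarrow> (nat \<Rightarrow> 'w pmf) \<Rightarrow> ('x,'i,'u,'w,'y) dyn \<Rightarrow> nat \<Rightarrow> 'i \<Rightarrow> 'i
   \<Rightarrow> ('x \<times> ('i \<Rightarrow> ('h1,'u,'y) hist) \<times> ('i \<Rightarrow> 'u) \<times> ('x \<times> ('i \<Rightarrow> 'y) \<times> ('i \<Rightarrow> real)) \<Rightarrow> real)
   \<Rightarrow> 'u \<Rightarrow> 'u \<Rightarrow> 'x \<times> ('i \<Rightarrow> ('h1,'u,'y) hist) \<Rightarrow> real" where
  "others_factor g W f t i j \<phi> ui uj a = (\<Sum>u\<in>{u. u i = ui \<and> u j = uj}.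
     (\<Prod>l\<in>-{i,j}. pmf (g t l (snd a l)) (u l)) * measure_pmf.expectation (W t) (\<lambda>w. \<phi> (fst a, snd a, u, f t (fst a) u w)))"

lemma prod_UNIV_pair:
  fixes F :: "'i::finite \<Rightarrow> 'a::comm_monoid_mult"
  assumes "i \<noteq> j"
  shows "(\<Prod>l\<in>UNIV. F l) = F i * F j * (\<Prod>l\<in>-{i,j}. F l)"
proof -
  have "(\<Prod>l\<in>UNIV. F l) = (\<Prod>l\<in>insert i (insert j (-{i,j})). F l)"
    by (rule prod.cong) auto
  then show ?thesis using assms by (simp add: mult.assoc)
qed

lemma expectation_step_pmf_joint_event:
  fixes S :: "('x \<times> ('i::finite \<Rightarrow> ('h1,'u::finite,'y) hist)) pmf"
    and W :: "nat \<Rightarrow> 'w::finite pmf" and \<phi> :: "_ \<Rightarrow> real"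
  assumes fin: "finite (set_pmf S)" and ij: "i \<noteq> j"
  shows "measure_pmf.expectation (step_pmf g f W t S) (\<lambda>\<omega>. indicator (joint_event i j hi hj ui uj) \<omega> * \<phi> \<omega>) =
    pmf (g t i hi) ui * pmf (g t j hj) uj *
    (\<Sum>a\<in>set_pmf S. pmf S a * (if snd a i = hi \<and> snd a j = hj then others_factor g W f t i j \<phi> ui uj a else 0))"
proof -
  have per_state: "(\<Sum>u\<in>UNIV. (\<Prod>l\<in>UNIV. pmf (g t l (snd a l)) (u l)) *
      measure_pmf.expectation (W t) (\<lambda>w. indicator (joint_event i j hi hj ui uj) (fst a, snd a, u, f t (fst a) u w) *
        \<phi> (fst a, snd a, u, f t (fst a) u w))) =
    pmf (g t i hi) ui * pmf (g t j hj) uj * (if snd a i = hi \<and> snd a j = hj then others_factor g W f t i j \<phi> ui uj a else 0)"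
    for a
  proof (cases "snd a i = hi \<and> snd a j = hj")
    case True
    then have "(\<Sum>u\<in>UNIV. (\<Prod>l\<in>UNIV. pmf (g t l (snd a l)) (u l)) *
        measure_pmf.expectation (W t) (\<lambda>w. indicator (joint_event i j hi hj ui uj) (fst a, snd a, u, f t (fst a) u w) *
          \<phi> (fst a, snd a, u, f t (fst a) u w))) =
      (\<Sum>u\<in>{u. u i = ui \<and> u j = uj}. (\<Prod>l\<in>UNIV. pmf (g t l (snd a l)) (u l)) *
        measure_pmf.expectation (W t) (\<lambda>w. \<phi> (fst a, snd a, u, f t (fst a) u w)))"
      by (subst sum.inter_filter[of UNIV, simplified]) (auto simp: indicator_def mem_joint_event intro!: sum.cong)
    also have "\<dots> = pmf (g t i hi) ui * pmf (g t j hj) uj * others_factor g W f t i j \<phi> ui uj a"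
      using True by (simp add: others_factor_def prod_UNIV_pair[OF ij] sum_distrib_left mult_ac)
    finally show ?thesis using True by simp
  next
    case False
    then show ?thesis by (auto simp: indicator_def mem_joint_event)
  qed
  show ?thesis
    by (simp only: expectation_step_pmf[OF fin] per_state sum_distrib_left mult.left_commute)
qed

lemma sum_set_pmf_transport:
  fixes S S' :: "('x \<times> ('i \<Rightarrow> 'h)) pmf" and \<Gamma> \<Gamma>' :: "'x \<times> ('i \<Rightarrow> 'h) \<Rightarrow> real"
  assumes fin: "finite (set_pmf S)" "finite (set_pmf S')" and ij: "i \<noteq> j"
    and pmf_eq: "\<And>x h. h i = hi \<Longrightarrow> h j = hj \<Longrightarrow> pmf S' (x, h(i := hi')) = c * pmf S (x, h)"
    and \<Gamma>_eq: "\<And>x h. (x, h) \<in> set_pmf S \<Longrightarrow> h i = hi \<Longrightarrow> h j = hj \<Longrightarrow> \<Gamma>' (x, h(i := hi')) = \<Gamma> (x, h)"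
  shows "(\<Sum>a\<in>set_pmf S'. pmf S' a * (if snd a i = hi' \<and> snd a j = hj then \<Gamma>' a else 0)) =
    c * (\<Sum>a\<in>set_pmf S. pmf S a * (if snd a i = hi \<and> snd a j = hj then \<Gamma> a else 0))"
proof -
  define \<sigma> :: "'x \<times> ('i \<Rightarrow> 'h) \<Rightarrow> 'x \<times> ('i \<Rightarrow> 'h)" where "\<sigma> = (\<lambda>(x, h). (x, h(i := hi')))"
  define B where "B = {a \<in> set_pmf S. snd a i = hi \<and> snd a j = hj}"
  have inj: "inj_on \<sigma> B"
  proof (rule inj_onI)
    fix a b assume "a \<in> B" "b \<in> B" "\<sigma> a = \<sigma> b"
    then show "a = b"
      by (cases a; cases b) (auto simp: B_def \<sigma>_def fun_eq_iff split: if_splits; metis)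
  qed
  have cover: "a \<in> \<sigma> ` B" if "a \<in> set_pmf S'" "snd a i = hi'" "snd a j = hj" for a
  proof -
    obtain x h' where a: "a = (x, h')" by (cases a)
    let ?b = "(x, h'(i := hi))"
    have "\<sigma> ?b = a" using that a by (auto simp: \<sigma>_def)
    moreover have "pmf S ?b \<noteq> 0"
      using pmf_eq[of "h'(i := hi)" x] that a ij by (auto simp: set_pmf_iff)
    ultimately show ?thesis
      using that a ij by (auto simp: B_def set_pmf_iff intro!: image_eqI[of _ _ ?b])
  qed
  have "(\<Sum>a\<in>set_pmf S'. pmf S' a * (if snd a i = hi' \<and> snd a j = hj then \<Gamma>' a else 0)) =
      (\<Sum>a\<in>\<sigma> ` B. pmf S' a * (if snd a i = hi' \<and> snd a j = hj then \<Gamma>' a else 0))"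
    using cover fin by (intro sum_set_pmf_superset) (auto simp: B_def split: if_splits)
  also have "\<dots> = (\<Sum>b\<in>B. pmf S' (\<sigma> b) * (if snd (\<sigma> b) i = hi' \<and> snd (\<sigma> b) j = hj then \<Gamma>' (\<sigma> b) else 0))"
    by (simp add: sum.reindex[OF inj])
  also have "\<dots> = (\<Sum>b\<in>B. c * (pmf S b * \<Gamma> b))"
    by (intro sum.cong refl) (auto simp: B_def \<sigma>_def pmf_eq \<Gamma>_eq ij not_sym[OF ij])
  also have "\<dots> = c * (\<Sum>a\<in>set_pmf S. pmf S a * (if snd a i = hi \<and> snd a j = hj then \<Gamma> a else 0))"
    by (simp add: B_def sum.inter_filter[OF fin(1)] sum_distrib_left if_distrib[of "\<lambda>z. _ * z"] cong: if_cong)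
  finally show ?thesis .
qed

lemma others_factor_cong:
  assumes "\<And>l. l \<noteq> i \<Longrightarrow> l \<noteq> j \<Longrightarrow> g' t l (h l) = g t l (h l)"
    and "\<And>x h v z. \<psi> (x, h(i := v), z) = \<psi> (x, h, z)"
  shows "others_factor g' W f t i j \<psi> ui uj (x, h(i := v)) = others_factor g W f t i j \<psi> ui uj (x, h)"
  unfolding others_factor_def using assms by (intro sum.cong refl arg_cong2[where f="(*)"] prod.cong) auto

lemma cexp_step_pmf_transfer:
  fixes S S' :: "('x \<times> ('i::finite \<Rightarrow> ('h1,'u::finite,'y) hist)) pmf" and W :: "nat \<Rightarrow> 'w::finite pmf"
    and \<phi> :: "_ \<Rightarrow> real" and g g' :: "('i,'h1,'u,'y) profile"
  assumes pos: "measure_pmf.prob (step_pmf g f W t S) (joint_event i j hi hj ui uj) > 0"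
    and act_pos: "pmf (g' t i hi') ui * pmf (g' t j hj) uj \<noteq> 0"
    and fin: "finite (set_pmf S)" "finite (set_pmf S')" and ij: "i \<noteq> j" and c: "c \<noteq> 0"
    and pmf_eq: "\<And>x h. h i = hi \<Longrightarrow> h j = hj \<Longrightarrow> pmf S' (x, h(i := hi')) = c * pmf S (x, h)"
    and strat_eq: "\<And>x h l. (x, h) \<in> set_pmf S \<Longrightarrow> h i = hi \<Longrightarrow> h j = hj \<Longrightarrow> l \<noteq> i \<Longrightarrow> l \<noteq> j \<Longrightarrow>
      g' t l (h l) = g t l (h l)"
    and \<phi>_inv: "\<And>x h v z. \<phi> (x, h(i := v), z) = \<phi> (x, h, z)"
  shows "measure_pmf.prob (step_pmf g' f W t S') (joint_event i j hi' hj ui uj) > 0"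
    and "cexp (step_pmf g f W t S) \<phi> (joint_event i j hi hj ui uj) =
         cexp (step_pmf g' f W t S') \<phi> (joint_event i j hi' hj ui uj)"
proof -
  let ?E = "joint_event i j hi hj ui uj" and ?E' = "joint_event i j hi' hj ui uj"
  define N where "N \<psi> = (\<Sum>a\<in>set_pmf S. pmf S a *
    (if snd a i = hi \<and> snd a j = hj then others_factor g W f t i j \<psi> ui uj a else 0))" for \<psi>
  define N' where "N' \<psi> = (\<Sum>a\<in>set_pmf S'. pmf S' a *
    (if snd a i = hi' \<and> snd a j = hj then others_factor g' W f t i j \<psi> ui uj a else 0))" for \<psi>
  define a where "a = pmf (g t i hi) ui * pmf (g t j hj) uj"
  define a' where "a' = pmf (g' t i hi') ui * pmf (g' t j hj) uj"
  have transport: "N' \<psi> = c * N \<psi>" if "\<And>x h v z. \<psi> (x, h(i := v), z) = \<psi> (x, h, z)" for \<psi>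
    unfolding N_def N'_def using fin ij pmf_eq
    by (rule sum_set_pmf_transport) (auto intro!: others_factor_cong strat_eq that)
  have num: "measure_pmf.expectation (step_pmf g f W t S) (\<lambda>\<omega>. indicator ?E \<omega> * \<psi> \<omega>) = a * N \<psi>" for \<psi>
    unfolding a_def N_def by (rule expectation_step_pmf_joint_event[OF fin(1) ij])
  have num': "measure_pmf.expectation (step_pmf g' f W t S') (\<lambda>\<omega>. indicator ?E' \<omega> * \<psi> \<omega>) = a' * N' \<psi>" for \<psi>
    unfolding a'_def N'_def by (rule expectation_step_pmf_joint_event[OF fin(2) ij])
  have prob: "measure_pmf.prob (step_pmf g f W t S) ?E = a * N (\<lambda>_. 1)"
    using num[of "\<lambda>_. 1"] by simp
  have prob': "measure_pmf.prob (step_pmf g' f W t S') ?E' = a' * (c * N (\<lambda>_. 1))"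
    using num'[of "\<lambda>_. 1"] by (simp add: transport)
  have "a \<noteq> 0" "N (\<lambda>_. 1) \<noteq> 0" "a' \<noteq> 0"
    using pos prob act_pos by (auto simp: a'_def)
  then have "measure_pmf.prob (step_pmf g' f W t S') ?E' \<noteq> 0"
    using prob' c by simp
  then show "measure_pmf.prob (step_pmf g' f W t S') ?E' > 0"
    by (simp add: zero_less_measure_iff)
  show "cexp (step_pmf g f W t S) \<phi> ?E = cexp (step_pmf g' f W t S') \<phi> ?E'"
    using \<open>a \<noteq> 0\<close> \<open>a' \<noteq> 0\<close> c
    by (simp add: cexp_def num num' prob prob' transport[of \<phi>, OF \<phi>_inv])
qed

section \<open>Uniform strategies for the two players\<close>

(* Outside the domain of histories the profile is normalized, so that it depends on g only through
   the strategies of the players other than i and j. *)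
definition uniformize :: "(nat \<Rightarrow> 'i \<Rightarrow> 'u set) \<Rightarrow> nat \<Rightarrow> 'i \<Rightarrow> 'i \<Rightarrow> ('i,'h1,'u,'y) profile \<Rightarrow> ('i,'h1,'u,'y) profile" where
  "uniformize U T i j g = (\<lambda>t l h. if t \<in> {1..T} \<and> length (snd h) = t - 1 then
      (if l = i \<or> l = j then pmf_of_set (U t l) else g t l h) else return_pmf undefined)"

lemma behavioral_action_in:
  "behavioral T U g \<Longrightarrow> t \<in> {1..T} \<Longrightarrow> length (snd h) = t - 1 \<Longrightarrow> u \<in> set_pmf (g t l h) \<Longrightarrow> u \<in> U t l"
  unfolding behavioral_def by blast

lemma behavioral_actions_nonempty:
  fixes g :: "('i,'h1,'u,'y) profile"
  assumes "behavioral T U g" "t \<in> {1..T}"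
  shows "U t l \<noteq> {}"
proof -
  let ?h = "(undefined, replicate (t - 1) undefined) :: ('h1,'u,'y) hist"
  obtain u where "u \<in> set_pmf (g t l ?h)"
    using set_pmf_not_empty by fast
  then have "u \<in> U t l"
    by (intro behavioral_action_in[OF assms]) simp_all
  then show ?thesis by blast
qed

lemma behavioral_uniformize:
  fixes U :: "nat \<Rightarrow> 'i \<Rightarrow> 'u::finite set"
  assumes "behavioral T U g"
  shows "behavioral T U (uniformize U T i j g)"
  using assms behavioral_actions_nonempty[OF assms]
  by (auto simp: behavioral_def uniformize_def)

lemma uniformize_cong:
  "agree_on T (- {i, j}) g g' \<Longrightarrow> uniformize U T i j g = uniformize U T i j g'"
  by (auto simp: agree_on_def uniformize_def fun_eq_iff)

lemma pmf_uniformize_nonzero: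
  fixes U :: "nat \<Rightarrow> 'i \<Rightarrow> 'u::finite set"
  assumes "behavioral T U g" "t \<in> {1..T}" "length (snd h) = t - 1" "u \<in> set_pmf (g t l h)"
  shows "pmf (uniformize U T i j g t l h) u \<noteq> 0"
proof -
  have "u \<in> U t l"
    using behavioral_action_in[OF assms] .
  then have "pmf (pmf_of_set (U t l)) u \<noteq> 0"
    by (subst pmf_of_set) (auto simp: card_gt_0_iff)
  then show ?thesis
    using assms by (auto simp: uniformize_def set_pmf_iff)
qed

lemma action_prob_uniformize:
  assumes "l \<noteq> i" "l \<noteq> j" "n < T"
  shows "action_prob (uniformize U T i j g) l n h = action_prob g l n h"
  using assms unfolding action_prob_def by (intro if_cong refl prod.cong) (auto simp: uniformize_def)

lemma action_prob_uniformize_nonzero: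
  fixes U :: "nat \<Rightarrow> 'i \<Rightarrow> 'u::finite set"
  assumes "behavioral T U g" "n < T" "action_prob g l n h \<noteq> 0"
  shows "action_prob (uniformize U T i j g) l n h \<noteq> 0"
proof -
  have len: "length (snd h) = n"
    and fac: "\<And>s. s < n \<Longrightarrow> pmf (g (Suc s) l (fst h, take s (snd h))) (fst (snd h ! s)) \<noteq> 0"
    using assms(3) by (auto simp: action_prob_def split: if_splits)
  have "pmf (uniformize U T i j g (Suc s) l (fst h, take s (snd h))) (fst (snd h ! s)) \<noteq> 0" if "s < n" for s
    using that len assms(2) fac[OF that] by (intro pmf_uniformize_nonzero[OF assms(1)]) (auto simp: set_pmf_iff)
  then show ?thesis
    using len by (simp add: action_prob_def)
qed

lemma action_prob_nonzero:
  fixes init :: "('x::finite \<times> ('i::finite \<Rightarrow> 'h1::finite)) pmf"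
    and W :: "nat \<Rightarrow> 'w::finite pmf" and f :: "('x,'i,'u::finite,'w,'y) dyn"
  assumes "(x, h) \<in> set_pmf (state_pmf init W f g n)"
  shows "action_prob g l n (h l) \<noteq> 0"
  using assms by (auto simp: set_pmf_iff pmf_state_pmf_factor)

lemma joint_event_witness:
  assumes "measure_pmf.prob (step_pmf g f W t S) (joint_event i j hi hj ui uj) > 0"
  obtains x h where "(x, h) \<in> set_pmf S" "h i = hi" "h j = hj"
    "ui \<in> set_pmf (g t i hi)" "uj \<in> set_pmf (g t j hj)"
proof -
  obtain \<omega> where "\<omega> \<in> set_pmf (step_pmf g f W t S)" "\<omega> \<in> joint_event i j hi hj ui uj"
    using assms measure_pmf_zero_iff[of "step_pmf g f W t S" "joint_event i j hi hj ui uj"] by fastforce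
  then show ?thesis
    by (elim set_pmf_step_pmfD) (auto simp: mem_joint_event intro: that)
qed

lemma pmf_state_pmf_uniformize:
  fixes init :: "('x::finite \<times> ('i::finite \<Rightarrow> 'h1::finite)) pmf"
    and W :: "nat \<Rightarrow> 'w::finite pmf" and f :: "('x,'i,'u::finite,'w,'y) dyn" and U :: "nat \<Rightarrow> 'i \<Rightarrow> 'u set"
  assumes ij: "i \<noteq> j" and b: "behavioral T U g" and n: "n < T"
    and w: "action_prob g i n hi \<noteq> 0" "action_prob g j n hj \<noteq> 0"
  obtains c where "c \<noteq> 0"
    and "\<And>x h. h i = hi \<Longrightarrow> h j = hj \<Longrightarrow>
      pmf (state_pmf init W f (uniformize U T i j g) n) (x, h) = c * pmf (state_pmf init W f g n) (x, h)"
proof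
  let ?g = "uniformize U T i j g"
  have w': "action_prob ?g i n hi \<noteq> 0" "action_prob ?g j n hj \<noteq> 0"
    using action_prob_uniformize_nonzero[OF b n] w by auto
  show "action_prob ?g i n hi * action_prob ?g j n hj / (action_prob g i n hi * action_prob g j n hj) \<noteq> 0"
    using w w' by simp
  show "pmf (state_pmf init W f ?g n) (x, h) =
      action_prob ?g i n hi * action_prob ?g j n hj / (action_prob g i n hi * action_prob g j n hj) *
      pmf (state_pmf init W f g n) (x, h)" if "h i = hi" "h j = hj" for x h
  proof -
    have "(\<Prod>l\<in>-{i,j}. action_prob ?g l n (h l)) = (\<Prod>l\<in>-{i,j}. action_prob g l n (h l))"
      using n by (intro prod.cong refl action_prob_uniformize) auto
    then show ?thesis
      using that w by (simp add: pmf_state_pmf_factor prod_UNIV_pair[OF ij] field_simps)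
  qed
qed

lemma cexp_trans_at_uniformize:
  fixes init :: "('x::finite \<times> ('i::finite \<Rightarrow> 'h1::finite)) pmf"
    and W :: "nat \<Rightarrow> 'w::finite pmf" and f :: "('x,'i,'u::finite,'w,'y::finite) dyn"
    and U :: "nat \<Rightarrow> 'i \<Rightarrow> 'u set" and \<phi> :: "_ \<Rightarrow> real"
  assumes ij: "i \<noteq> j" and b: "behavioral T U g" and t: "t \<in> {1..T}"
    and \<phi>_inv: "\<And>x h v z. \<phi> (x, h(i := v), z) = \<phi> (x, h, z)"
    and pos: "measure_pmf.prob (trans_at init W f g t) (joint_event i j hi hj ui uj) > 0"
  shows "measure_pmf.prob (trans_at init W f (uniformize U T i j g) t) (joint_event i j hi hj ui uj) > 0"
    and "cexp (trans_at init W f g t) \<phi> (joint_event i j hi hj ui uj) =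
         cexp (trans_at init W f (uniformize U T i j g) t) \<phi> (joint_event i j hi hj ui uj)"
proof -
  define n where "n = t - 1"
  define g' where "g' = uniformize U T i j g"
  let ?S = "state_pmf init W f g n" and ?S' = "state_pmf init W f g' n"
  have tr: "trans_at init W f g t = step_pmf g f W t ?S" "trans_at init W f g' t = step_pmf g' f W t ?S'"
    by (simp_all add: trans_at_def state_at_def n_def)
  obtain x0 h0 where s0: "(x0, h0) \<in> set_pmf ?S" "h0 i = hi" "h0 j = hj"
    "ui \<in> set_pmf (g t i hi)" "uj \<in> set_pmf (g t j hj)"
    using pos unfolding tr by (rule joint_event_witness)
  have "n < T"
    using t by (auto simp: n_def)
  moreover have "action_prob g i n hi \<noteq> 0" "action_prob g j n hj \<noteq> 0"
    using action_prob_nonzero[OF s0(1)] s0 by auto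
  ultimately obtain c where c: "c \<noteq> 0"
    and pmf_eq: "\<And>x h. h i = hi \<Longrightarrow> h j = hj \<Longrightarrow> pmf ?S' (x, h(i := hi)) = c * pmf ?S (x, h)"
    unfolding g'_def by (metis pmf_state_pmf_uniformize[OF ij b] fun_upd_triv)
  have strat_eq: "g' t l (h l) = g t l (h l)"
    if "(x, h) \<in> set_pmf ?S" "h i = hi" "h j = hj" "l \<noteq> i" "l \<noteq> j" for x h l
    using length_hist_state_pmf[OF that(1), of l] that t by (simp add: g'_def uniformize_def n_def)
  have "length (snd hi) = t - 1" "length (snd hj) = t - 1"
    using length_hist_state_pmf[OF s0(1)] s0 by (auto simp: n_def)
  then have act_pos: "pmf (g' t i hi) ui * pmf (g' t j hj) uj \<noteq> 0"
    unfolding g'_def using pmf_uniformize_nonzero[OF b t] s0 by simp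
  have fin: "finite (set_pmf ?S)" "finite (set_pmf ?S')"
    by (rule finite_set_pmf_state_pmf)+
  note transfer_hyps = pos[unfolded tr] act_pos fin ij c pmf_eq strat_eq \<phi>_inv
  show "measure_pmf.prob (trans_at init W f (uniformize U T i j g) t) (joint_event i j hi hj ui uj) > 0"
    unfolding g'_def[symmetric] tr using transfer_hyps by (rule cexp_step_pmf_transfer(1))
  show "cexp (trans_at init W f g t) \<phi> (joint_event i j hi hj ui uj) =
      cexp (trans_at init W f (uniformize U T i j g) t) \<phi> (joint_event i j hi hj ui uj)"
    unfolding g'_def[symmetric] tr using transfer_hyps by (rule cexp_step_pmf_transfer(2))
qed

section \<open>Histories with the same compression\<close>

lemma pmf_state_at_USI_factor:
  fixes init :: "('x \<times> ('i::finite \<Rightarrow> 'h1)) pmf" and g :: "('i,'h1,'u,'y) profile"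
  assumes usi: "USI init W f U T \<iota>1 \<iota> i" and b: "behavioral T U g" and t: "t \<in> {1..T}"
    and pos: "measure_pmf.prob (state_at init W f g t) {(x, h). compress \<iota>1 \<iota> i (h i) = k} > 0"
  obtains F :: "('h1,'u,'y) hist \<Rightarrow> real" and \<Phi> :: "'x \<times> ('i \<Rightarrow> ('h1,'u,'y) hist) \<Rightarrow> real"
  where "\<And>x h. compress \<iota>1 \<iota> i (h i) = k \<Longrightarrow> pmf (state_at init W f g t) (x, h) = F (h i) * \<Phi> (x, h(i := undefined))"
proof -
  let ?S = "state_at init W f g t" and ?K = "{(x, h). compress \<iota>1 \<iota> i (h i) = k}"
  obtain F \<Phi> where cprob_eq: "\<And>x h. cprob ?S {(x, h)} ?K = pmf (F g t k) (h i) * pmf (\<Phi> g t k) (x, h(i := undefined))"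
    using usi b t pos unfolding USI_def by blast
  have "pmf ?S (x, h) = measure_pmf.prob ?S ?K * pmf (F g t k) (h i) * pmf (\<Phi> g t k) (x, h(i := undefined))"
    if "compress \<iota>1 \<iota> i (h i) = k" for x h
    using cprob_eq[of x h] that pos by (simp add: cprob_def measure_pmf_single field_simps)
  then show ?thesis
    by (intro that[of "\<lambda>hi. measure_pmf.prob ?S ?K * pmf (F g t k) hi" "pmf (\<Phi> g t k)"]) simp
qed

lemma cexp_trans_at_same_compression:
  fixes init :: "('x::finite \<times> ('i::finite \<Rightarrow> 'h1::finite)) pmf"
    and W :: "nat \<Rightarrow> 'w::finite pmf" and f :: "('x,'i,'u::finite,'w,'y::finite) dyn" and \<phi> :: "_ \<Rightarrow> real"
  assumes usi: "USI init W f U T \<iota>1 \<iota> i" and ij: "i \<noteq> j" and b: "behavioral T U g" and t: "t \<in> {1..T}"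
    and \<phi>_inv: "\<And>x h v z. \<phi> (x, h(i := v), z) = \<phi> (x, h, z)"
    and pos: "measure_pmf.prob (trans_at init W f g t) (joint_event i j hi hj ui uj) > 0"
    and pos': "measure_pmf.prob (trans_at init W f g t) (joint_event i j hi' hj ui uj) > 0"
    and same_k: "compress \<iota>1 \<iota> i hi' = compress \<iota>1 \<iota> i hi"
  shows "cexp (trans_at init W f g t) \<phi> (joint_event i j hi hj ui uj) =
    cexp (trans_at init W f g t) \<phi> (joint_event i j hi' hj ui uj)"
proof -
  let ?S = "state_at init W f g t"
  have tr: "trans_at init W f g t = step_pmf g f W t ?S"
    by (simp add: trans_at_def)
  obtain x1 h1 where s1: "(x1, h1) \<in> set_pmf ?S" "h1 i = hi" "h1 j = hj"
    using pos unfolding tr by (rule joint_event_witness)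
  obtain x2 h2 where s2: "(x2, h2) \<in> set_pmf ?S" "h2 i = hi'" "h2 j = hj"
    "ui \<in> set_pmf (g t i hi')" "uj \<in> set_pmf (g t j hj)"
    using pos' unfolding tr by (rule joint_event_witness)
  have "measure_pmf.prob ?S {(x, h). compress \<iota>1 \<iota> i (h i) = compress \<iota>1 \<iota> i hi} > 0"
    using s1 by (intro measure_pmf_posI) auto
  then obtain F \<Phi> where factor: "\<And>x h. compress \<iota>1 \<iota> i (h i) = compress \<iota>1 \<iota> i hi \<Longrightarrow>
      pmf ?S (x, h) = F (h i) * \<Phi> (x, h(i := undefined))"
    using pmf_state_at_USI_factor[OF usi b t] by blast
  have F: "F hi \<noteq> 0" "F hi' \<noteq> 0"
    using factor[of h1 x1] factor[of h2 x2] s1 s2 same_k by (auto simp: set_pmf_iff)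
  define c where "c = F hi' / F hi"
  have c: "c \<noteq> 0"
    using F by (simp add: c_def)
  have pmf_eq: "pmf ?S (x, h(i := hi')) = c * pmf ?S (x, h)" if "h i = hi" "h j = hj" for x h
    using factor[of "h(i := hi')" x] factor[of h x] that same_k F by (simp add: c_def)
  have act_pos: "pmf (g t i hi') ui * pmf (g t j hj) uj \<noteq> 0"
    using s2 by (simp add: set_pmf_iff)
  have fin: "finite (set_pmf ?S)"
    unfolding state_at_def by (rule finite_set_pmf_state_pmf)
  show ?thesis
    unfolding tr using pos[unfolded tr] act_pos fin fin ij c pmf_eq refl \<phi>_inv
    by (rule cexp_step_pmf_transfer(2))
qed

lemma cexp_trans_at_determined:
  fixes init :: "('x::finite \<times> ('i::finite \<Rightarrow> 'h1::finite)) pmf"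
    and W :: "nat \<Rightarrow> 'w::finite pmf" and f :: "('x,'i,'u::finite,'w,'y::finite) dyn" and \<phi> :: "_ \<Rightarrow> real"
  assumes usi: "USI init W f U T \<iota>1 \<iota> i" and ij: "i \<noteq> j"
    and \<phi>_inv: "\<And>x h v z. \<phi> (x, h(i := v), z) = \<phi> (x, h, z)"
    and b: "behavioral T U g" and b': "behavioral T U g'" and agree: "agree_on T (- {i, j}) g g'"
    and t: "t \<in> {1..T}"
    and pos: "measure_pmf.prob (trans_at init W f g t) (joint_event i j hi hj ui uj) > 0"
    and pos': "measure_pmf.prob (trans_at init W f g' t) (joint_event i j hi' hj ui uj) > 0"
    and same_k: "compress \<iota>1 \<iota> i hi' = compress \<iota>1 \<iota> i hi"
  shows "cexp (trans_at init W f g t) \<phi> (joint_event i j hi hj ui uj) =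
    cexp (trans_at init W f g' t) \<phi> (joint_event i j hi' hj ui uj)"
proof -
  let ?g = "uniformize U T i j g"
  have g': "uniformize U T i j g' = ?g"
    using uniformize_cong[OF agree] by simp
  have "cexp (trans_at init W f g t) \<phi> (joint_event i j hi hj ui uj) =
      cexp (trans_at init W f ?g t) \<phi> (joint_event i j hi hj ui uj)"
    by (rule cexp_trans_at_uniformize(2)[where \<phi> = \<phi>, OF ij b t \<phi>_inv pos])
  also have "\<dots> = cexp (trans_at init W f ?g t) \<phi> (joint_event i j hi' hj ui uj)"
    by (rule cexp_trans_at_same_compression[where \<phi> = \<phi>, OF usi ij behavioral_uniformize[OF b] t \<phi>_inv
          cexp_trans_at_uniformize(1)[where \<phi> = \<phi>, OF ij b t \<phi>_inv pos]
          cexp_trans_at_uniformize(1)[where \<phi> = \<phi>, OF ij b' t \<phi>_inv pos', unfolded g'] same_k])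
  also have "\<dots> = cexp (trans_at init W f g' t) \<phi> (joint_event i j hi' hj ui uj)"
    using cexp_trans_at_uniformize(2)[where \<phi> = \<phi>, OF ij b' t \<phi>_inv pos'] by (simp add: g')
  finally show ?thesis .
qed

lemma cprob_eq_cexp_indicator: "cprob p A B = cexp p (indicator A) B"
proof -
  have "(\<lambda>\<omega>. indicator B \<omega> * indicator A \<omega> :: real) = indicator (A \<inter> B)"
    by (auto simp: indicator_def fun_eq_iff)
  then show ?thesis
    by (simp add: cprob_def cexp_def)
qed

lemma pmf_map_cond_pmf:
  assumes "measure_pmf.prob p E > 0"
  shows "pmf (map_pmf \<pi> (cond_pmf p E)) y = cprob p (\<pi> -` {y}) E"
proof -
  have "set_pmf p \<inter> E \<noteq> {}"
    using assms measure_pmf_zero_iff[of p E] by auto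
  then have "measure_pmf (cond_pmf p E) = uniform_measure (measure_pmf p) E"
    by (rule cond_pmf.rep_eq)
  then show ?thesis
    using assms by (simp add: pmf_map cprob_def measure_pmf.emeasure_eq_measure Int_commute)
qed

lemma cond_law_trans_at_determined:
  fixes init :: "('x::finite \<times> ('i::finite \<Rightarrow> 'h1::finite)) pmf"
    and W :: "nat \<Rightarrow> 'w::finite pmf" and f :: "('x,'i,'u::finite,'w,'y::finite) dyn"
  assumes usi: "USI init W f U T \<iota>1 \<iota> i" and ij: "i \<noteq> j"
    and b: "behavioral T U g" and b': "behavioral T U g'" and agree: "agree_on T (- {i, j}) g g'"
    and t: "t \<in> {1..T}"
    and pos: "measure_pmf.prob (trans_at init W f g t) (joint_event i j hi hj ui uj) > 0"
    and pos': "measure_pmf.prob (trans_at init W f g' t) (joint_event i j hi' hj ui uj) > 0"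
    and same_k: "compress \<iota>1 \<iota> i hi' = compress \<iota>1 \<iota> i hi"
  shows "map_pmf (\<lambda>(x, h, u, x', y, rw). next_hist (h j) (u j) (y j)) (cond_pmf (trans_at init W f g t) (joint_event i j hi hj ui uj)) =
    map_pmf (\<lambda>(x, h, u, x', y, rw). next_hist (h j) (u j) (y j)) (cond_pmf (trans_at init W f g' t) (joint_event i j hi' hj ui uj))"
    (is "map_pmf ?next _ = map_pmf ?next _")
proof (rule pmf_eqI)
  fix hn
  have "indicator (?next -` {hn}) (x, h(i := v), z) = (indicator (?next -` {hn}) (x, h, z) :: real)" for x h v z
    using ij by (cases z) (simp add: indicator_def)
  then show "pmf (map_pmf ?next (cond_pmf (trans_at init W f g t) (joint_event i j hi hj ui uj))) hn =
      pmf (map_pmf ?next (cond_pmf (trans_at init W f g' t) (joint_event i j hi' hj ui uj))) hn"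
    using cexp_trans_at_determined[OF usi ij _ b b' agree t pos pos' same_k]
    by (simp add: pmf_map_cond_pmf[OF pos] pmf_map_cond_pmf[OF pos'] cprob_eq_cexp_indicator)
qed

lemma abs_cexp_le_1:
  assumes fin: "finite (set_pmf p)" and bound: "\<And>\<omega>. \<omega> \<in> set_pmf p \<Longrightarrow> \<bar>X \<omega>\<bar> \<le> 1"
  shows "\<bar>cexp p X E\<bar> \<le> 1"
proof -
  have "\<bar>measure_pmf.expectation p (\<lambda>\<omega>. indicator E \<omega> * X \<omega>)\<bar> \<le> measure_pmf.expectation p (indicator E)"
  proof -
    have "\<bar>measure_pmf.expectation p (\<lambda>\<omega>. indicator E \<omega> * X \<omega>)\<bar> \<le> measure_pmf.expectation p (\<lambda>\<omega>. \<bar>indicator E \<omega> * X \<omega>\<bar>)"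
      by (rule integral_abs_bound)
    also have "\<dots> \<le> measure_pmf.expectation p (indicator E)"
      using fin bound
      by (intro integral_mono_AE integrable_measure_pmf_finite)
         (auto simp: AE_measure_pmf_iff indicator_def abs_mult)
    finally show ?thesis .
  qed
  then show ?thesis
    by (cases "measure_pmf.prob p E = 0") (simp_all add: cexp_def divide_le_eq_1)
qed

lemma cexp_reward_bound:
  fixes init :: "('x::finite \<times> ('i::finite \<Rightarrow> 'h1::finite)) pmf"
    and W :: "nat \<Rightarrow> 'w::finite pmf" and f :: "('x,'i,'u::finite,'w,'y) dyn"
  assumes rew: "\<forall>t\<in>{1..T}. \<forall>x u w l. (\<forall>m. u m \<in> U t m) \<longrightarrow> \<bar>snd (snd (f t x u w)) l\<bar> \<le> 1"
    and b: "behavioral T U g" and t: "t \<in> {1..T}"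
  shows "\<bar>cexp (trans_at init W f g t) (\<lambda>(x, h, u, x', y, rw). rw j) E\<bar> \<le> 1"
proof (rule abs_cexp_le_1)
  show "finite (set_pmf (trans_at init W f g t))"
    unfolding trans_at_def state_at_def by (intro finite_set_pmf_step_pmf finite_set_pmf_state_pmf)
  fix \<omega> assume "\<omega> \<in> set_pmf (trans_at init W f g t)"
  then obtain x h u w where \<omega>: "\<omega> = (x, h, u, f t x u w)" "(x, h) \<in> set_pmf (state_at init W f g t)"
    "\<And>l. u l \<in> set_pmf (g t l (h l))"
    unfolding trans_at_def by (rule set_pmf_step_pmfD) blast
  have "u m \<in> U t m" for m
    using behavioral_action_in[OF b t length_hist_state_pmf[OF \<omega>(2)[unfolded state_at_def]] \<omega>(3)] .
  then have "\<bar>snd (snd (f t x u w)) j\<bar> \<le> 1"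
    using rew t by blast
  then show "\<bar>(\<lambda>(x, h, u, x', y, rw). rw j) \<omega>\<bar> \<le> 1"
    using \<omega>(1) by (cases "f t x u w") simp
qed

section \<open>Versions of the conditional laws\<close>

lemma equivp_agree_on: "equivp (agree_on T P)"
  by (rule equivpI) (auto simp: reflp_def symp_def transp_def agree_on_def)

lemma factor_through_key:
  fixes val :: "'g \<Rightarrow> 'a \<Rightarrow> 'v" and key :: "'a \<Rightarrow> 'b"
  assumes R: "equivp R"
    and det: "\<And>g g' a b. R g g' \<Longrightarrow> D g a \<Longrightarrow> D g' b \<Longrightarrow> key a = key b \<Longrightarrow> val g a = val g' b"
  obtains V where "\<And>g g'. R g g' \<Longrightarrow> V g = V g'"
    and "\<And>g a. D g a \<Longrightarrow> V g (key a) = val g a"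
    and "\<And>g k. V g k = dflt \<or> (\<exists>g' a. D g' a \<and> key a = k \<and> V g k = val g' a)"
proof
  define C where "C g k = (\<lambda>(g', a). R g g' \<and> D g' a \<and> key a = k)" for g k
  define V where "V g k = (if Ex (C g k) then case_prod val (SOME c. C g k c) else dflt)" for g k
  have chosen: "\<exists>g' a. C g k (g', a) \<and> V g k = val g' a" if "C g k c" for g k c
  proof -
    obtain g' a where "(SOME c. C g k c) = (g', a)"
      by fastforce
    then show ?thesis
      using someI[of "C g k", OF that] that by (auto simp: V_def)
  qed
  show "V g = V g'" if "R g g'" for g g'
  proof -
    have "C g = C g'"
      using that by (auto simp: C_def fun_eq_iff; meson R equivp_symp equivp_transp)
    then show ?thesis
      by (intro ext) (simp add: V_def)
  qed
  show "V g (key a) = val g a" if "D g a" for g a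
  proof -
    have "C g (key a) (g, a)"
      using that equivp_reflp[OF R] by (simp add: C_def)
    then obtain g' a' where "C g (key a) (g', a')" "V g (key a) = val g' a'"
      using chosen by blast
    then show ?thesis
      using det[of g g' a a'] that by (auto simp: C_def)
  qed
  show "V g k = dflt \<or> (\<exists>g' a. D g' a \<and> key a = k \<and> V g k = val g' a)" for g k
    using chosen[of g k] by (cases "Ex (C g k)") (auto simp: V_def C_def)
qed

lemma version_through_compression:
  fixes init :: "('x \<times> ('i::finite \<Rightarrow> 'h1)) pmf" and W :: "nat \<Rightarrow> 'w pmf" and f :: "('x,'i,'u,'w,'y) dyn"
    and val :: "('i,'h1,'u,'y) profile \<Rightarrow> nat \<Rightarrow> ('h1,'u,'y) hist \<Rightarrow> ('h1,'u,'y) hist \<Rightarrow> 'u \<Rightarrow> 'u \<Rightarrow> 'v"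
  assumes det: "\<And>g g' t hi hi' hj ui uj. behavioral T U g \<Longrightarrow> behavioral T U g' \<Longrightarrow>
      agree_on T (- {i, j}) g g' \<Longrightarrow> t \<in> {1..T} \<Longrightarrow>
      measure_pmf.prob (trans_at init W f g t) (joint_event i j hi hj ui uj) > 0 \<Longrightarrow>
      measure_pmf.prob (trans_at init W f g' t) (joint_event i j hi' hj ui uj) > 0 \<Longrightarrow>
      compress \<iota>1 \<iota> i hi' = compress \<iota>1 \<iota> i hi \<Longrightarrow> val g t hi hj ui uj = val g' t hi' hj ui uj"
  obtains V :: "('i,'h1,'u,'y) profile \<Rightarrow> nat \<Rightarrow> 'k \<Rightarrow> ('h1,'u,'y) hist \<Rightarrow> 'u \<Rightarrow> 'u \<Rightarrow> 'v"
  where "\<And>g g'. agree_on T (- {i, j}) g g' \<Longrightarrow> V g = V g'"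
    and "\<And>g t hi hj ui uj. behavioral T U g \<Longrightarrow> t \<in> {1..T} \<Longrightarrow>
      measure_pmf.prob (trans_at init W f g t) (joint_event i j hi hj ui uj) > 0 \<Longrightarrow>
      V g t (compress \<iota>1 \<iota> i hi) hj ui uj = val g t hi hj ui uj"
    and "\<And>g t k hj ui uj. V g t k hj ui uj = dflt \<or>
      (\<exists>g' hi. behavioral T U g' \<and> t \<in> {1..T} \<and> V g t k hj ui uj = val g' t hi hj ui uj)"
proof -
  define D where "D g = (\<lambda>(t, hi, hj, ui, uj). behavioral T U g \<and> t \<in> {1..T} \<and>
      measure_pmf.prob (trans_at init W f g t) (joint_event i j hi hj ui uj) > 0)" for g
  define key :: "nat \<times> ('h1,'u,'y) hist \<times> ('h1,'u,'y) hist \<times> 'u \<times> 'u \<Rightarrow> nat \<times> 'k \<times> ('h1,'u,'y) hist \<times> 'u \<times> 'u"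
    where "key = (\<lambda>(t, hi, hj, ui, uj). (t, compress \<iota>1 \<iota> i hi, hj, ui, uj))"
  have det_tuple: "(case a of (t, hi, hj, ui, uj) \<Rightarrow> val g t hi hj ui uj) = (case b of (t, hi, hj, ui, uj) \<Rightarrow> val g' t hi hj ui uj)"
    if "agree_on T (- {i, j}) g g'" "D g a" "D g' b" "key a = key b" for g g' a b
    using that by (cases a; cases b) (auto simp: D_def key_def intro: det)
  obtain V where V_inv: "\<And>g g'. agree_on T (- {i, j}) g g' \<Longrightarrow> V g = V g'"
    and V_val: "\<And>g a. D g a \<Longrightarrow> V g (key a) = (case a of (t, hi, hj, ui, uj) \<Rightarrow> val g t hi hj ui uj)"
    and V_range: "\<And>g k. V g k = dflt \<or> (\<exists>g' a. D g' a \<and> key a = k \<and> V g k = (case a of (t, hi, hj, ui, uj) \<Rightarrow> val g' t hi hj ui uj))"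
    using factor_through_key[OF equivp_agree_on, where D = D and key = key and dflt = dflt
        and val = "\<lambda>g (t, hi, hj, ui, uj). val g t hi hj ui uj"] det_tuple by blast
  show thesis
  proof (rule that[of "\<lambda>g t k hj ui uj. V g (t, k, hj, ui, uj)"])
    show "(\<lambda>t k hj ui uj. V g (t, k, hj, ui, uj)) = (\<lambda>t k hj ui uj. V g' (t, k, hj, ui, uj))"
      if "agree_on T (- {i, j}) g g'" for g g'
      using V_inv[OF that] by simp
    show "V g (t, compress \<iota>1 \<iota> i hi, hj, ui, uj) = val g t hi hj ui uj"
      if "behavioral T U g" "t \<in> {1..T}" "measure_pmf.prob (trans_at init W f g t) (joint_event i j hi hj ui uj) > 0"
      for g t hi hj ui uj
      using V_val[of g "(t, hi, hj, ui, uj)"] that by (simp add: D_def key_def)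
    show "V g (t, k, hj, ui, uj) = dflt \<or>
        (\<exists>g' hi. behavioral T U g' \<and> t \<in> {1..T} \<and> V g (t, k, hj, ui, uj) = val g' t hi hj ui uj)"
      for g t k hj ui uj
      using V_range[of g "(t, k, hj, ui, uj)"] by (auto simp: D_def key_def)
  qed
qed

lemma next_hist_law_version:
  fixes init :: "('x::finite \<times> ('i::finite \<Rightarrow> 'h1::finite)) pmf"
    and W :: "nat \<Rightarrow> 'w::finite pmf" and f :: "('x,'i,'u::finite,'w,'y::finite) dyn"
  assumes usi: "USI init W f U T \<iota>1 \<iota> i" and ij: "i \<noteq> j"
  obtains Pi_j :: "('i,'h1,'u,'y) profile \<Rightarrow> nat \<Rightarrow> 'k \<Rightarrow> ('h1,'u,'y) hist \<Rightarrow> 'u \<Rightarrow> 'u \<Rightarrow> ('h1,'u,'y) hist pmf"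
  where "\<And>g g'. agree_on T (- {i, j}) g g' \<Longrightarrow> Pi_j g = Pi_j g'"
    and "\<And>g t hi hj ui uj hn. behavioral T U g \<Longrightarrow> t \<in> {1..T} \<Longrightarrow>
      measure_pmf.prob (trans_at init W f g t) (joint_event i j hi hj ui uj) > 0 \<Longrightarrow>
      cprob (trans_at init W f g t) {(x, h, u, x', y, rw). next_hist (h j) (u j) (y j) = hn} (joint_event i j hi hj ui uj) =
      pmf (Pi_j g t (compress \<iota>1 \<iota> i hi) hj ui uj) hn"
proof -
  obtain Pi_j where Pi_inv: "\<And>g g'. agree_on T (- {i, j}) g g' \<Longrightarrow> Pi_j g = Pi_j g'"
    and Pi_law: "\<And>g t hi hj ui uj. behavioral T U g \<Longrightarrow> t \<in> {1..T} \<Longrightarrow>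
      measure_pmf.prob (trans_at init W f g t) (joint_event i j hi hj ui uj) > 0 \<Longrightarrow>
      Pi_j g t (compress \<iota>1 \<iota> i hi) hj ui uj =
        map_pmf (\<lambda>(x, h, u, x', y, rw). next_hist (h j) (u j) (y j)) (cond_pmf (trans_at init W f g t) (joint_event i j hi hj ui uj))"
    by (rule version_through_compression[where val = "\<lambda>g t hi hj ui uj. map_pmf (\<lambda>(x, h, u, x', y, rw).
          next_hist (h j) (u j) (y j)) (cond_pmf (trans_at init W f g t) (joint_event i j hi hj ui uj))"],
        rule cond_law_trans_at_determined[OF usi ij], assumption+, blast)
  have "(\<lambda>(x, h, u, x', y, rw). next_hist (h j) (u j) (y j)) -` {hn} =
      {(x :: 'x, h, u, x' :: 'x, y, rw :: 'i \<Rightarrow> real). next_hist (h j) (u j) (y j) = hn}" for hn :: "('h1,'u,'y) hist"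
    by auto
  with Pi_inv Pi_law show thesis
    by (intro that[of Pi_j]) (auto simp: pmf_map_cond_pmf)
qed

lemma reward_version:
  fixes init :: "('x::finite \<times> ('i::finite \<Rightarrow> 'h1::finite)) pmf"
    and W :: "nat \<Rightarrow> 'w::finite pmf" and f :: "('x,'i,'u::finite,'w,'y::finite) dyn"
  assumes rew: "\<forall>t\<in>{1..T}. \<forall>x u w l. (\<forall>m. u m \<in> U t m) \<longrightarrow> \<bar>snd (snd (f t x u w)) l\<bar> \<le> 1"
    and usi: "USI init W f U T \<iota>1 \<iota> i" and ij: "i \<noteq> j"
  obtains r :: "('i,'h1,'u,'y) profile \<Rightarrow> nat \<Rightarrow> 'k \<Rightarrow> ('h1,'u,'y) hist \<Rightarrow> 'u \<Rightarrow> 'u \<Rightarrow> real"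
  where "\<And>g g'. agree_on T (- {i, j}) g g' \<Longrightarrow> r g = r g'"
    and "\<And>g t k hj ui uj. r g t k hj ui uj \<in> {-1..1}"
    and "\<And>g t hi hj ui uj. behavioral T U g \<Longrightarrow> t \<in> {1..T} \<Longrightarrow>
      measure_pmf.prob (trans_at init W f g t) (joint_event i j hi hj ui uj) > 0 \<Longrightarrow>
      cexp (trans_at init W f g t) (\<lambda>(x, h, u, x', y, rw). rw j) (joint_event i j hi hj ui uj) =
      r g t (compress \<iota>1 \<iota> i hi) hj ui uj"
proof -
  have reward_inv: "(\<lambda>(x, h, u, x', y, rw). rw j) (x, h(i := v), z) = ((\<lambda>(x, h, u, x', y, rw). rw j) (x, h, z) :: real)"
    for x :: 'x and h :: "'i \<Rightarrow> ('h1,'u,'y) hist" and v and z :: "('i \<Rightarrow> 'u) \<times> 'x \<times> ('i \<Rightarrow> 'y) \<times> ('i \<Rightarrow> real)"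
    by (simp add: split_beta)
  obtain r where r_inv: "\<And>g g'. agree_on T (- {i, j}) g g' \<Longrightarrow> r g = r g'"
    and r_cexp: "\<And>g t hi hj ui uj. behavioral T U g \<Longrightarrow> t \<in> {1..T} \<Longrightarrow>
      measure_pmf.prob (trans_at init W f g t) (joint_event i j hi hj ui uj) > 0 \<Longrightarrow>
      r g t (compress \<iota>1 \<iota> i hi) hj ui uj = cexp (trans_at init W f g t) (\<lambda>(x, h, u, x', y, rw). rw j) (joint_event i j hi hj ui uj)"
    and r_range: "\<And>g t k hj ui uj. r g t k hj ui uj = 0 \<or> (\<exists>g' hi. behavioral T U g' \<and> t \<in> {1..T} \<and>
      r g t k hj ui uj = cexp (trans_at init W f g' t) (\<lambda>(x, h, u, x', y, rw). rw j) (joint_event i j hi hj ui uj))"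
    by (rule version_through_compression[where val = "\<lambda>g t hi hj ui uj.
          cexp (trans_at init W f g t) (\<lambda>(x, h, u, x', y, rw). rw j) (joint_event i j hi hj ui uj)" and dflt = 0],
        rule cexp_trans_at_determined[where \<phi> = "\<lambda>(x, h, u, x', y, rw). rw j", OF usi ij reward_inv], assumption+, blast)
  have r_bound: "r g t k hj ui uj \<in> {-1..1}" for g t k hj ui uj
  proof (cases "r g t k hj ui uj = 0")
    case False
    then obtain g' hi where b': "behavioral T U g'" and t: "t \<in> {1..T}"
      and r_eq: "r g t k hj ui uj = cexp (trans_at init W f g' t) (\<lambda>(x, h, u, x', y, rw). rw j) (joint_event i j hi hj ui uj)"
      using r_range by blast
    show ?thesis
      using cexp_reward_bound[OF rew b' t] r_eq by (simp add: abs_le_iff)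
  qed simp
  with r_inv r_cexp show thesis
    by (intro that[of r]) auto
qed

theorem lemma8:
  fixes init :: "('x::finite \<times> ('i::finite \<Rightarrow> 'h1::finite)) pmf"
    and W :: "nat \<Rightarrow> 'w::finite pmf"
    and f :: "('x,'i,'u::finite,'w,'y::finite) dyn"
    and U :: "nat \<Rightarrow> 'i \<Rightarrow> 'u set"
    and T :: nat
    and \<iota>1 :: "'i \<Rightarrow> 'h1 \<Rightarrow> 'k"
    and \<iota> :: "nat \<Rightarrow> 'i \<Rightarrow> 'k \<Rightarrow> 'u \<times> 'y \<Rightarrow> 'k"
    and i j :: 'i
  assumes rew: "\<forall>t\<in>{1..T}. \<forall>x u w l. (\<forall>m. u m \<in> U t m) \<longrightarrow> \<bar>snd (snd (f t x u w)) l\<bar> \<le> 1"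
    and usi: "USI init W f U T \<iota>1 \<iota> i"
    and ji: "j \<noteq> i"
  shows "\<exists>(Pi_j :: ('i,'h1,'u,'y) profile \<Rightarrow> nat \<Rightarrow> 'k \<Rightarrow> ('h1,'u,'y) hist \<Rightarrow> 'u \<Rightarrow> 'u \<Rightarrow> ('h1,'u,'y) hist pmf)
           (r :: ('i,'h1,'u,'y) profile \<Rightarrow> nat \<Rightarrow> 'k \<Rightarrow> ('h1,'u,'y) hist \<Rightarrow> 'u \<Rightarrow> 'u \<Rightarrow> real).
     (\<forall>g g'. behavioral T U g \<and> behavioral T U g' \<and> agree_on T (- {i, j}) g g'
        \<longrightarrow> Pi_j g = Pi_j g' \<and> r g = r g') \<and>
     (\<forall>g t k hj ui uj. r g t k hj ui uj \<in> {-1..1}) \<and>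
     (\<forall>g. behavioral T U g \<longrightarrow>
       (\<forall>t\<in>{1..T}. \<forall>hi hj ui uj.
         measure_pmf.prob (trans_at init W f g t)
            {(x, h, u, x', y, rw). h i = hi \<and> h j = hj \<and> u i = ui \<and> u j = uj} > 0 \<longrightarrow>
         ((t < T \<longrightarrow>
            (\<forall>hn. cprob (trans_at init W f g t)
                     {(x, h, u, x', y, rw). next_hist (h j) (u j) (y j) = hn}
                     {(x, h, u, x', y, rw). h i = hi \<and> h j = hj \<and> u i = ui \<and> u j = uj}
                   = pmf (Pi_j g t (compress \<iota>1 \<iota> i hi) hj ui uj) hn)) \<and>
          cexp (trans_at init W f g t) (\<lambda>(x, h, u, x', y, rw). rw j)
              {(x, h, u, x', y, rw). h i = hi \<and> h j = hj \<and> u i = ui \<and> u j = uj}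
            = r g t (compress \<iota>1 \<iota> i hi) hj ui uj)))"
proof -
  have ij: "i \<noteq> j"
    using ji by simp
  obtain Pi_j where Pi_inv: "\<And>g g'. agree_on T (- {i, j}) g g' \<Longrightarrow> Pi_j g = Pi_j g'"
    and Pi_law: "\<And>g t hi hj ui uj hn. behavioral T U g \<Longrightarrow> t \<in> {1..T} \<Longrightarrow>
      measure_pmf.prob (trans_at init W f g t) (joint_event i j hi hj ui uj) > 0 \<Longrightarrow>
      cprob (trans_at init W f g t) {(x, h, u, x', y, rw). next_hist (h j) (u j) (y j) = hn} (joint_event i j hi hj ui uj) =
      pmf (Pi_j g t (compress \<iota>1 \<iota> i hi) hj ui uj) hn"
    using next_hist_law_version[OF usi ij] by blast
  obtain r where r_inv: "\<And>g g'. agree_on T (- {i, j}) g g' \<Longrightarrow> r g = r g'"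
    and r_bound: "\<And>g t k hj ui uj. r g t k hj ui uj \<in> {-1..1}"
    and r_cexp: "\<And>g t hi hj ui uj. behavioral T U g \<Longrightarrow> t \<in> {1..T} \<Longrightarrow>
      measure_pmf.prob (trans_at init W f g t) (joint_event i j hi hj ui uj) > 0 \<Longrightarrow>
      cexp (trans_at init W f g t) (\<lambda>(x, h, u, x', y, rw). rw j) (joint_event i j hi hj ui uj) =
      r g t (compress \<iota>1 \<iota> i hi) hj ui uj"
    using reward_version[OF rew usi ij] by blast
  show ?thesis
    unfolding joint_event_def[symmetric]
    by (intro exI[of _ Pi_j] exI[of _ r] conjI allI impI ballI) (auto simp: Pi_law r_cexp r_bound[unfolded atLeastAtMost_iff] dest: Pi_inv r_inv)
qed

end
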